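(* Let $\mathcal{H}$ be a two-dimensional Hilbert space and let $\mathcal{N}$ be any trace-preserving completely positive (TPCP) map on $\mathcal{L}(\mathcal{H})$ (the noise). For a TPCP map $\mathcal{C}$ on $\mathcal{L}(\mathcal{H})$ (the ex-post control), define the average fidelity $$\bar F(\mathcal{C}):=\int_{\|\ket{\psi}\|=1} d\psi\, \braket{\psi|\mathcal{C}\circ\mathcal{N}(\ket{\psi}\bra{\psi})|\psi},$$ where $d\psi$ is the uniform probability measure on the unit sphere of $\mathcal{H}$. Then the maximum of $\bar F(\mathcal{C})$ over all TPCP maps $\mathcal{C}$ is attained by a unitary transformation, i.e. by a map of the form $\mathcal{C}(\rho)=W\rho W^\dagger$ with $W$ a unitary operator on $\mathcal{H}$.
   Context: $\mathcal{L}(\mathcal{H})$ denotes the set of linear operators on $\mathcal{H}$. *)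

theory Defs
  imports "HOL-Analysis.Analysis"
begin

type_synonym qvec = "complex ^ 2"
type_synonym qop = "complex ^ 2 ^ 2"

definition mtrace :: "qop \<Rightarrow> complex" where
  "mtrace A = (\<Sum>i\<in>UNIV. A $ i $ i)"

definition adj :: "qop \<Rightarrow> qop" where
  "adj A = (\<chi> i j. cnj (A $ j $ i))"

definition unitary_op :: "qop \<Rightarrow> bool" where
  "unitary_op W \<longleftrightarrow> W ** adj W = mat 1 \<and> adj W ** W = mat 1"

definition clinear_map :: "(qop \<Rightarrow> qop) \<Rightarrow> bool" where
  "clinear_map \<Phi> \<longleftrightarrow> (\<forall>A B. \<Phi> (A + B) = \<Phi> A + \<Phi> B) \<and>
     (\<forall>c A. \<Phi> (\<chi> i j. c * A $ i $ j) = (\<chi> i j. c * \<Phi> A $ i $ j))"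

text \<open>An operator on C^n \<otimes> H is represented as an n x n block matrix with blocks in L(H)
  (only the blocks with indices < n matter).\<close>
definition block_qform :: "nat \<Rightarrow> (nat \<Rightarrow> nat \<Rightarrow> qop) \<Rightarrow> (nat \<Rightarrow> qvec) \<Rightarrow> complex" where
  "block_qform n B v =
     (\<Sum>i<n. \<Sum>j<n. \<Sum>k\<in>UNIV. \<Sum>l\<in>UNIV. cnj (v i $ k) * (B i j) $ k $ l * v j $ l)"

definition block_psd :: "nat \<Rightarrow> (nat \<Rightarrow> nat \<Rightarrow> qop) \<Rightarrow> bool" where
  "block_psd n B \<longleftrightarrow> (\<forall>v. Im (block_qform n B v) = 0 \<and> Re (block_qform n B v) \<ge> 0)"

text \<open>Complete positivity: id_n \<otimes> \<Phi> is positive for every n.\<close>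
definition completely_positive :: "(qop \<Rightarrow> qop) \<Rightarrow> bool" where
  "completely_positive \<Phi> \<longleftrightarrow> clinear_map \<Phi> \<and>
     (\<forall>n B. block_psd n B \<longrightarrow> block_psd n (\<lambda>i j. \<Phi> (B i j)))"

definition trace_preserving :: "(qop \<Rightarrow> qop) \<Rightarrow> bool" where
  "trace_preserving \<Phi> \<longleftrightarrow> (\<forall>A. mtrace (\<Phi> A) = mtrace A)"

definition TPCP :: "(qop \<Rightarrow> qop) \<Rightarrow> bool" where
  "TPCP \<Phi> \<longleftrightarrow> completely_positive \<Phi> \<and> trace_preserving \<Phi>"

definition ketbra :: "qvec \<Rightarrow> qop" where
  "ketbra \<psi> = (\<chi> i j. \<psi> $ i * cnj (\<psi> $ j))"

definition expval :: "qvec \<Rightarrow> qop \<Rightarrow> complex" where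
  "expval \<psi> A = (\<Sum>i\<in>UNIV. \<Sum>j\<in>UNIV. cnj (\<psi> $ i) * A $ i $ j * \<psi> $ j)"

text \<open>Uniform (unitarily invariant) probability measure on the unit sphere of H = C^2 = R^4:
  the image of the uniform distribution on the unit ball under radial projection.\<close>
definition sphere_measure :: "qvec measure" where
  "sphere_measure = distr (uniform_measure lborel (ball 0 1)) borel (\<lambda>x. x /\<^sub>R norm x)"

definition avg_fidelity :: "(qop \<Rightarrow> qop) \<Rightarrow> (qop \<Rightarrow> qop) \<Rightarrow> real" where
  "avg_fidelity \<N> \<C> = (\<integral>\<psi>. Re (expval \<psi> (\<C> (\<N> (ketbra \<psi>)))) \<partial>sphere_measure)"

end

theory Submission
  imports Defs
begin

text \<open>Averaging over the unitarily invariant measure on the sphere involves only fourth moments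
  of the coordinates, which orthogonal invariance and polarization determine up to one constant.
  Hence the average fidelity of a channel is an increasing affine function of its entanglement
  fidelity. For a correction \<open>\<C>\<close> the entanglement fidelity of \<open>\<C> \<circ> \<N>\<close> is a pairing
  \<open>tr (S R) / 4\<close>, where \<open>S\<close> is a real symmetric \<open>4 \<times> 4\<close> matrix determined by \<open>\<N>\<close>, and \<open>R\<close>
  is the Choi matrix of \<open>\<C>\<close> written in the quaternion basis \<open>1, i\<sigma>\<^sub>x, i\<sigma>\<^sub>y, i\<sigma>\<^sub>z\<close>:
  a positive semidefinite matrix (complete positivity) of trace \<open>4\<close> (trace preservation).
  So \<open>tr (S R) / 4\<close> is at most the largest eigenvalue of \<open>S\<close>, and this value is attained by
  conjugation with the unitary \<open>y\<^sub>1 + i (y\<^sub>2 \<sigma>\<^sub>x + y\<^sub>3 \<sigma>\<^sub>y + y\<^sub>4 \<sigma>\<^sub>z)\<close> for a top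
  eigenvector \<open>y\<close> of \<open>S\<close>.\<close>

section \<open>Orthogonal invariance of the uniform measure on the sphere\<close>

lemma linear_borel_measurable:
  fixes f :: "'a::euclidean_space \<Rightarrow> 'b::euclidean_space"
  shows "linear f \<Longrightarrow> f \<in> borel_measurable borel"
  by (intro borel_measurable_continuous_onI linear_continuous_on iffD1[OF linear_conv_bounded_linear])

lemma lborel_distr_basis_isometry:
  fixes L :: "'a::euclidean_space \<Rightarrow> 'b::euclidean_space"
  assumes lin: "linear L" and inner: "\<And>x y. L x \<bullet> L y = x \<bullet> y" and basis: "L ` Basis = Basis"
    and inv1: "\<And>y. L (L' y) = y" and inv2: "\<And>x. L' (L x) = x"
  shows "distr lborel borel L = lborel"
proof (rule lborel_eqI[symmetric])
  have adjoint: "L' l \<bullet> b = l \<bullet> L b" for l b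
    by (metis inner inv1)
  show "sets (distr lborel borel L) = sets borel" by simp
  fix l u :: 'b
  assume le: "\<And>b. b \<in> Basis \<Longrightarrow> l \<bullet> b \<le> u \<bullet> b"
  have "x \<in> L -` box l u \<longleftrightarrow> x \<in> box (L' l) (L' u)" for x
  proof -
    have "x \<in> L -` box l u \<longleftrightarrow> (\<forall>b\<in>L ` Basis. l \<bullet> b < L x \<bullet> b \<and> L x \<bullet> b < u \<bullet> b)"
      using basis by (simp add: mem_box)
    also have "\<dots> \<longleftrightarrow> x \<in> box (L' l) (L' u)"
      by (simp add: inner mem_box adjoint)
    finally show ?thesis .
  qed
  then have preimage: "L -` box l u = box (L' l) (L' u)" by blast
  have le': "\<And>b. b \<in> Basis \<Longrightarrow> L' l \<bullet> b \<le> L' u \<bullet> b"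
    using le basis by (auto simp: adjoint)
  have "inj_on L Basis"
    by (metis inj_on_inverseI inv2)
  have "emeasure (distr lborel borel L) (box l u) = emeasure lborel (box (L' l) (L' u))"
    using linear_borel_measurable[OF lin] by (simp add: emeasure_distr preimage)
  also have "\<dots> = (\<Prod>b\<in>Basis. (u - l) \<bullet> L b)"
    using le' by (simp add: inner_diff_left adjoint)
  also have "\<dots> = (\<Prod>b\<in>Basis. (u - l) \<bullet> b)"
    using basis \<open>inj_on L Basis\<close> by (metis (no_types, lifting) prod.reindex_cong)
  finally show "emeasure (distr lborel borel L) (box l u) = (\<Prod>b\<in>Basis. (u - l) \<bullet> b)" .
qed

lemma lborel_distr_orthogonal_transformation:
  fixes T :: "real^'n::{finite,wellorder} \<Rightarrow> real^'n::_"
  assumes T: "orthogonal_transformation T"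
  shows "distr lborel borel T = lborel"
proof (rule lborel_eqI[symmetric])
  have meas: "T \<in> borel_measurable borel"
    by (rule linear_borel_measurable[OF orthogonal_transformation_linear[OF T]])
  show "sets (distr lborel borel T) = sets borel" by simp
  fix l u :: "real^'n::_"
  assume le: "\<And>b. b \<in> Basis \<Longrightarrow> l \<bullet> b \<le> u \<bullet> b"
  have invT: "orthogonal_transformation (inv T)"
    using T orthogonal_transformation_inv by blast
  have preimage: "T -` box l u = inv T ` box l u"
    using T orthogonal_transformation_bij bij_vimage_eq_inv_image by blast
  have box: "box l u \<in> lmeasurable" by simp
  have "T -` box l u \<in> sets borel"
    using measurable_sets_borel[OF meas, of "box l u"] by simp
  then have "emeasure (distr lborel borel T) (box l u) = emeasure lebesgue (T -` box l u)"
    using meas by (simp add: emeasure_distr emeasure_completion)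
  also have "\<dots> = emeasure lebesgue (box l u)"
    using measurable_orthogonal_image[OF invT box] measure_orthogonal_image[OF invT box] box
    by (simp add: preimage emeasure_eq_measure2)
  also have "\<dots> = (\<Prod>b\<in>Basis. (u - l) \<bullet> b)"
    using le by (simp add: emeasure_completion)
  finally show "emeasure (distr lborel borel T) (box l u) = (\<Prod>b\<in>Basis. (u - l) \<bullet> b)" .
qed

lemma orthogonal_transformation_isometry_conj:
  assumes "linear f" "linear g" "\<And>x y. f x \<bullet> f y = x \<bullet> y" "\<And>x y. g x \<bullet> g y = x \<bullet> y"
    and T: "orthogonal_transformation T"
  shows "orthogonal_transformation (\<lambda>x. g (T (f x)))"
  using assms linear_compose[OF linear_compose[OF \<open>linear f\<close> orthogonal_transformation_linear[OF T]]
      \<open>linear g\<close>]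
  by (simp add: orthogonal_transformation_def o_def)

text \<open>The library proves invariance of Lebesgue measure under orthogonal maps only on
  \<open>real^'n\<close>; it is transported to \<open>complex^2\<close> along the isometry below.\<close>

definition c2_of_r4 :: "real^4 \<Rightarrow> complex^2" where
  "c2_of_r4 x = (\<chi> i. if i = 1 then Complex (x$1) (x$2) else Complex (x$3) (x$4))"

definition r4_of_c2 :: "complex^2 \<Rightarrow> real^4" where
  "r4_of_c2 z = (\<chi> j. if j = 1 then Re (z$1) else if j = 2 then Im (z$1)
     else if j = 3 then Re (z$2) else Im (z$2))"

lemma c2_of_r4_of_c2 [simp]: "c2_of_r4 (r4_of_c2 z) = z"
  by (simp add: c2_of_r4_def r4_of_c2_def vec_eq_iff forall_2 complex_eq_iff)

lemma r4_of_c2_of_r4 [simp]: "r4_of_c2 (c2_of_r4 x) = x"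
  by (simp add: c2_of_r4_def r4_of_c2_def vec_eq_iff forall_4)

lemma inner_c2_of_r4: "c2_of_r4 x \<bullet> c2_of_r4 y = x \<bullet> y"
  by (simp add: c2_of_r4_def inner_vec_def sum_2 sum_4 inner_complex_def)

lemma inner_r4_of_c2: "r4_of_c2 x \<bullet> r4_of_c2 y = x \<bullet> y"
  by (metis c2_of_r4_of_c2 inner_c2_of_r4)

lemma linear_c2_of_r4: "linear c2_of_r4"
  by (rule linearI) (simp_all add: c2_of_r4_def vec_eq_iff forall_2 complex_eq_iff)

lemma linear_r4_of_c2: "linear r4_of_c2"
  by (rule linearI) (simp_all add: r4_of_c2_def vec_eq_iff forall_4)

lemma c2_of_r4_Basis: "c2_of_r4 ` Basis = Basis"
proof -
  have r4: "(Basis :: (real^4) set) = {axis 1 1, axis 2 1, axis 3 1, axis 4 1}"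
    by (auto simp: Basis_vec_def UNIV_4)
  have c2: "(Basis :: (complex^2) set) = {axis 1 1, axis 1 \<i>, axis 2 1, axis 2 \<i>}"
    by (auto simp: Basis_vec_def UNIV_2 Basis_complex_def)
  show ?thesis
    unfolding r4 c2 by (auto simp: c2_of_r4_def axis_def vec_eq_iff forall_2 complex_eq_iff)
qed

lemma lborel_distr_c2_of_r4: "distr lborel borel c2_of_r4 = lborel"
  by (rule lborel_distr_basis_isometry[OF linear_c2_of_r4 inner_c2_of_r4 c2_of_r4_Basis
        c2_of_r4_of_c2 r4_of_c2_of_r4])

lemma lborel_distr_orthogonal_transformation_c2:
  assumes T: "orthogonal_transformation (T :: complex^2 \<Rightarrow> complex^2)"
  shows "distr lborel borel T = lborel"
proof -
  define T' where "T' x = r4_of_c2 (T (c2_of_r4 x))" for x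
  have T': "orthogonal_transformation T'"
    unfolding T'_def by (rule orthogonal_transformation_isometry_conj[OF linear_c2_of_r4
          linear_r4_of_c2 inner_c2_of_r4 inner_r4_of_c2 T])
  have meas: "T \<in> borel_measurable borel" "T' \<in> borel_measurable borel"
    "c2_of_r4 \<in> borel_measurable borel"
    using T T' linear_c2_of_r4 by (auto intro: linear_borel_measurable orthogonal_transformation_linear)
  have "distr lborel borel T = distr (distr lborel borel c2_of_r4) borel T"
    by (simp add: lborel_distr_c2_of_r4)
  also have "\<dots> = distr lborel borel (T \<circ> c2_of_r4)"
    by (rule distr_distr) (simp_all add: meas)
  also have "T \<circ> c2_of_r4 = c2_of_r4 \<circ> T'"
    by (simp add: T'_def fun_eq_iff)
  also have "distr lborel borel (c2_of_r4 \<circ> T') = distr (distr lborel borel T') borel c2_of_r4"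
    by (rule distr_distr[symmetric]) (simp_all add: meas)
  also have "\<dots> = lborel"
    by (simp add: lborel_distr_orthogonal_transformation[OF T'] lborel_distr_c2_of_r4)
  finally show ?thesis .
qed

lemma orthogonal_transformation_exists_c2:
  fixes a b :: "complex^2"
  assumes "norm a = norm b"
  obtains T where "orthogonal_transformation T" "T a = b"
proof -
  have "norm (r4_of_c2 a) = norm (r4_of_c2 b)"
    using assms by (simp add: norm_eq_sqrt_inner inner_r4_of_c2)
  then obtain f where f: "orthogonal_transformation f" "f (r4_of_c2 a) = r4_of_c2 b"
    by (rule orthogonal_transformation_exists)
  show ?thesis
    using that orthogonal_transformation_isometry_conj[OF linear_r4_of_c2 linear_c2_of_r4
        inner_r4_of_c2 inner_c2_of_r4 f(1)] f(2) by simp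
qed

abbreviation ball_measure :: "qvec measure" where
  "ball_measure \<equiv> uniform_measure lborel (ball 0 1)"

lemma sphere_measure_sgn: "sphere_measure = distr ball_measure borel sgn"
  by (simp add: sphere_measure_def sgn_div_norm[abs_def])

lemma sets_sphere_measure [measurable_cong]: "sets sphere_measure = sets borel"
  by (simp add: sphere_measure_sgn)

lemma space_sphere_measure: "space sphere_measure = UNIV"
  by (simp add: sphere_measure_sgn)

lemma finite_measure_sphere_measure: "finite_measure sphere_measure"
proof (rule finite_measureI)
  have ball: "emeasure lborel (ball (0::qvec) 1) \<noteq> 0" "emeasure lborel (ball (0::qvec) 1) \<noteq> \<infinity>"
    using emeasure_lborel_ball_finite[of "0::qvec" 1] content_ball_pos[of 1 "0::qvec"]
    by (simp_all add: emeasure_eq_ennreal_measure)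
  have "emeasure sphere_measure UNIV = emeasure ball_measure UNIV"
    by (simp add: sphere_measure_sgn emeasure_distr)
  also have "\<dots> = 1"
    using ball by (simp add: emeasure_uniform_measure divide_eq_1_ennreal)
  finally show "emeasure sphere_measure (space sphere_measure) \<noteq> \<infinity>"
    by (simp add: space_sphere_measure)
qed

lemma ball_measure_orthogonal_invariant:
  assumes T: "orthogonal_transformation T"
  shows "distr ball_measure borel T = ball_measure"
proof (rule measure_eqI)
  have meas: "T \<in> borel_measurable borel"
    by (rule linear_borel_measurable[OF orthogonal_transformation_linear[OF T]])
  have ball: "T -` ball 0 1 = ball 0 1"
    using T by (auto simp: orthogonal_transformation_norm)
  show "sets (distr ball_measure borel T) = sets ball_measure" by simp
  fix X assume "X \<in> sets (distr ball_measure borel T)"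
  then have X: "X \<in> sets borel" by simp
  have "emeasure lborel (ball 0 1 \<inter> T -` X) = emeasure (distr lborel borel T) (ball 0 1 \<inter> X)"
    using meas X by (simp add: emeasure_distr vimage_Int ball)
  then show "emeasure (distr ball_measure borel T) X = emeasure ball_measure X"
    using meas X measurable_sets_borel[OF meas X]
    by (simp add: emeasure_distr emeasure_uniform_measure lborel_distr_orthogonal_transformation_c2[OF T])
qed

lemma sphere_measure_orthogonal_invariant:
  assumes T: "orthogonal_transformation T"
  shows "distr sphere_measure borel T = sphere_measure"
proof -
  have meas: "T \<in> borel_measurable borel"
    by (rule linear_borel_measurable[OF orthogonal_transformation_linear[OF T]])
  have "T \<circ> sgn = sgn \<circ> T"
    using T by (simp add: fun_eq_iff sgn_div_norm orthogonal_transformation_scaleR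
        orthogonal_transformation_norm)
  then have "distr sphere_measure borel T = distr (distr ball_measure borel T) borel sgn"
    unfolding sphere_measure_sgn using meas by (simp add: distr_distr)
  then show ?thesis
    by (simp add: ball_measure_orthogonal_invariant[OF T] sphere_measure_sgn)
qed

lemma integral_sphere_measure_orthogonal:
  fixes f :: "qvec \<Rightarrow> 'b::{banach,second_countable_topology}"
  assumes T: "orthogonal_transformation T" and f: "f \<in> borel_measurable borel"
  shows "(\<integral>x. f (T x) \<partial>sphere_measure) = (\<integral>x. f x \<partial>sphere_measure)"
proof -
  have meas: "T \<in> borel_measurable borel"
    by (rule linear_borel_measurable[OF orthogonal_transformation_linear[OF T]])
  have "(\<integral>x. f x \<partial>sphere_measure) = (\<integral>x. f x \<partial>distr sphere_measure borel T)"
    by (simp add: sphere_measure_orthogonal_invariant[OF T])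
  also have "\<dots> = (\<integral>x. f (T x) \<partial>sphere_measure)"
    by (rule integral_distr) (use meas f in simp_all)
  finally show ?thesis by simp
qed

lemma integrable_sphere_measure:
  fixes f :: "qvec \<Rightarrow> 'b::{banach,second_countable_topology}"
  assumes f: "continuous_on UNIV f"
  shows "integrable sphere_measure f"
proof -
  interpret finite_measure sphere_measure by (rule finite_measure_sphere_measure)
  obtain B where B: "\<And>x. x \<in> cball 0 1 \<Longrightarrow> norm (f x) \<le> B"
    using compact_imp_bounded[OF compact_continuous_image[OF continuous_on_subset[OF f] compact_cball]]
    by (metis bounded_iff image_eqI subset_UNIV)
  have "AE x in sphere_measure. norm x \<le> 1"
    unfolding sphere_measure_sgn by (subst AE_distr_iff) (auto simp: norm_sgn)
  then have "AE x in sphere_measure. norm (f x) \<le> B"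
    by eventually_elim (use B in auto)
  then show ?thesis
    using borel_measurable_continuous_onI[OF f] by (intro integrable_const_bound) auto
qed

section \<open>Fourth moments of the sphere measure\<close>

definition sphere_moment4 :: real where
  "sphere_moment4 = (\<integral>x. (axis 1 1 \<bullet> x) ^ 4 \<partial>sphere_measure)"

lemma sphere_moment4_nonneg: "0 \<le> sphere_moment4"
  unfolding sphere_moment4_def by (rule integral_nonneg_AE) simp

lemma integral_inner_power4:
  "(\<integral>x. (p \<bullet> x) ^ 4 \<partial>sphere_measure) = sphere_moment4 * norm p ^ 4"
proof -
  have "norm (norm p *\<^sub>R axis 1 1 :: qvec) = norm p" by simp
  then obtain T :: "qvec \<Rightarrow> qvec" where T: "orthogonal_transformation T" "T (norm p *\<^sub>R axis 1 1) = p"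
    by (rule orthogonal_transformation_exists_c2)
  have "p \<bullet> T x = norm p * (axis 1 1 \<bullet> x)" for x
  proof -
    have "p \<bullet> T x = T (norm p *\<^sub>R axis 1 1) \<bullet> T x"
      using T(2) by simp
    also have "\<dots> = norm p * (axis 1 1 \<bullet> x)"
      using T(1) by (simp add: orthogonal_transformation_def)
    finally show ?thesis .
  qed
  then have "(\<integral>x. (p \<bullet> x) ^ 4 \<partial>sphere_measure) = (\<integral>x. norm p ^ 4 * (axis 1 1 \<bullet> x) ^ 4 \<partial>sphere_measure)"
    using integral_sphere_measure_orthogonal[OF T(1), of "\<lambda>x. (p \<bullet> x) ^ 4"]
    by (simp add: power_mult_distrib)
  then show ?thesis by (simp add: sphere_moment4_def)
qed

lemma polarization4:
  fixes a b c d :: "'a::field_char_0"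
  shows "a * b * c * d = ((a+b+c+d)^4 - (a+b+c-d)^4 - (a+b-c+d)^4 + (a+b-c-d)^4
     - (a-b+c+d)^4 + (a-b+c-d)^4 + (a-b-c+d)^4 - (a-b-c-d)^4) / 192"
  by (simp add: field_simps power4_eq_xxxx)

lemma integral_inner_prod4:
  "(\<integral>x. (p \<bullet> x) * (q \<bullet> x) * (r \<bullet> x) * (s \<bullet> x) \<partial>sphere_measure) =
     sphere_moment4 / 3 * ((p \<bullet> q) * (r \<bullet> s) + (p \<bullet> r) * (q \<bullet> s) + (p \<bullet> s) * (q \<bullet> r))"
proof -
  let ?F = "\<lambda>P. \<integral>x. (P \<bullet> x) ^ 4 \<partial>sphere_measure"
  have integrable: "integrable sphere_measure (\<lambda>x. (P \<bullet> x) ^ 4 :: real)" for P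
    by (rule integrable_sphere_measure) (intro continuous_intros)
  have pointwise: "(p \<bullet> x) * (q \<bullet> x) * (r \<bullet> x) * (s \<bullet> x) =
     (((p+q+r+s) \<bullet> x)^4 - ((p+q+r-s) \<bullet> x)^4 - ((p+q-r+s) \<bullet> x)^4 + ((p+q-r-s) \<bullet> x)^4
     - ((p-q+r+s) \<bullet> x)^4 + ((p-q+r-s) \<bullet> x)^4 + ((p-q-r+s) \<bullet> x)^4 - ((p-q-r-s) \<bullet> x)^4) / 192" for x
    by (simp only: inner_add_left inner_diff_left polarization4)
  have "(\<integral>x. (p \<bullet> x) * (q \<bullet> x) * (r \<bullet> x) * (s \<bullet> x) \<partial>sphere_measure) =
     (?F (p+q+r+s) - ?F (p+q+r-s) - ?F (p+q-r+s) + ?F (p+q-r-s)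
     - ?F (p-q+r+s) + ?F (p-q+r-s) + ?F (p-q-r+s) - ?F (p-q-r-s)) / 192"
    unfolding pointwise by (simp add: integrable)
  then show ?thesis
    unfolding integral_inner_power4 norm_eq_sqrt_inner
    by (simp add: power4_eq_xxxx inner_add_left inner_add_right inner_diff_left inner_diff_right
        inner_commute field_simps)
qed

lemma integrable_coordinate_moment:
  "integrable sphere_measure (\<lambda>x. cnj (x$i) * x$j * x$a * cnj (x$b))"
  by (rule integrable_sphere_measure) (intro continuous_intros)

lemma integral_coordinate_moment:
  "(\<integral>x. cnj (x$i) * x$j * x$a * cnj (x$b) \<partial>sphere_measure) =
     of_real (4 * sphere_moment4 / 3) * (of_bool (i = j \<and> a = b) + of_bool (i = a \<and> j = b))"
proof -
  define u where "u k x = (axis k 1 :: qvec) \<bullet> x" for k x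
  define v where "v k x = (axis k \<i> :: qvec) \<bullet> x" for k x
  have coord: "x$k = Complex (u k x) (v k x)" for k x
    by (simp add: u_def v_def inner_axis' complex_eq_iff inner_complex_def)
  have re: "Re (cnj (x$i) * x$j * x$a * cnj (x$b)) =
      u i x * u j x * u a x * u b x + u i x * u j x * v a x * v b x
    + v i x * v j x * u a x * u b x + v i x * v j x * v a x * v b x
    - u i x * v j x * v a x * u b x + u i x * v j x * u a x * v b x
    + v i x * u j x * v a x * u b x - v i x * u j x * u a x * v b x" for x
    by (simp add: coord algebra_simps)
  have im: "Im (cnj (x$i) * x$j * x$a * cnj (x$b)) =
      u i x * u j x * v a x * u b x - u i x * u j x * u a x * v b x
    + v i x * v j x * v a x * u b x - v i x * v j x * u a x * v b x
    + u i x * v j x * u a x * u b x + u i x * v j x * v a x * v b x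
    - v i x * u j x * u a x * u b x - v i x * u j x * v a x * v b x" for x
    by (simp add: coord algebra_simps)
  have integrable: "integrable sphere_measure (\<lambda>x. (p \<bullet> x) * (q \<bullet> x) * (r \<bullet> x) * (s \<bullet> x) :: real)"
    for p q r s :: qvec
    by (rule integrable_sphere_measure) (intro continuous_intros)
  have "(\<integral>x. cnj (x$i) * x$j * x$a * cnj (x$b) \<partial>sphere_measure) =
    Complex (\<integral>x. Re (cnj (x$i) * x$j * x$a * cnj (x$b)) \<partial>sphere_measure)
      (\<integral>x. Im (cnj (x$i) * x$j * x$a * cnj (x$b)) \<partial>sphere_measure)"
    by (simp only: complex_eq_iff complex.sel integral_Re integral_Im integrable_coordinate_moment simp_thms)
  also have "(\<integral>x. Re (cnj (x$i) * x$j * x$a * cnj (x$b)) \<partial>sphere_measure) =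
      4 * sphere_moment4 / 3 * (of_bool (i = j \<and> a = b) + of_bool (i = a \<and> j = b))"
    unfolding re u_def v_def
    by (simp only: Bochner_Integration.integral_add Bochner_Integration.integral_diff integrable
        Bochner_Integration.integrable_add Bochner_Integration.integrable_diff)
      (simp add: integral_inner_prod4 inner_axis_axis inner_complex_def)
  also have "(\<integral>x. Im (cnj (x$i) * x$j * x$a * cnj (x$b)) \<partial>sphere_measure) = 0"
    unfolding im u_def v_def
    by (simp only: Bochner_Integration.integral_add Bochner_Integration.integral_diff integrable
        Bochner_Integration.integrable_add Bochner_Integration.integrable_diff)
      (simp add: integral_inner_prod4 inner_axis_axis inner_complex_def)
  finally show ?thesis
    by (simp add: complex_eq_iff)
qed

section \<open>The average fidelity through the Choi tensor\<close>

definition matrix_unit :: "2 \<Rightarrow> 2 \<Rightarrow> qop" where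
  "matrix_unit a b = (\<chi> k l. of_bool (k = a \<and> l = b))"

definition choi :: "(qop \<Rightarrow> qop) \<Rightarrow> 2 \<Rightarrow> 2 \<Rightarrow> 2 \<Rightarrow> 2 \<Rightarrow> complex" where
  "choi \<Phi> a b c d = \<Phi> (matrix_unit a b) $ c $ d"

lemma clinear_map_choi_expansion:
  assumes "clinear_map \<Phi>"
  shows "\<Phi> A $ c $ d = (\<Sum>a\<in>UNIV. \<Sum>b\<in>UNIV. A$a$b * choi \<Phi> a b c d)"
proof -
  have lin: "\<Phi> (B + B') = \<Phi> B + \<Phi> B'" "\<Phi> (\<chi> i j. z * B$i$j) = (\<chi> i j. z * \<Phi> B $i$j)" for B B' z
    using assms by (simp_all add: clinear_map_def)
  have "A = (\<chi> i j. A$1$1 * matrix_unit 1 1 $i$j) + (\<chi> i j. A$1$2 * matrix_unit 1 2 $i$j)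
      + (\<chi> i j. A$2$1 * matrix_unit 2 1 $i$j) + (\<chi> i j. A$2$2 * matrix_unit 2 2 $i$j)"
    by (simp add: vec_eq_iff forall_2 matrix_unit_def)
  from arg_cong[where f = \<Phi>, OF this]
  have "\<Phi> A = (\<chi> i j. A$1$1 * choi \<Phi> 1 1 i j) + (\<chi> i j. A$1$2 * choi \<Phi> 1 2 i j)
      + (\<chi> i j. A$2$1 * choi \<Phi> 2 1 i j) + (\<chi> i j. A$2$2 * choi \<Phi> 2 2 i j)"
    by (simp only: lin choi_def)
  then show ?thesis by (simp add: sum_2)
qed

lemma clinear_map_comp: "clinear_map \<Psi> \<Longrightarrow> clinear_map \<Phi> \<Longrightarrow> clinear_map (\<lambda>A. \<Psi> (\<Phi> A))"
  unfolding clinear_map_def by simp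

lemma clinear_map_conj: "clinear_map (\<lambda>A. W ** A ** adj W)"
  by (simp add: clinear_map_def vec_eq_iff matrix_matrix_mult_def sum_2 algebra_simps)

lemma mtrace_conj_unitary:
  assumes "unitary_op W"
  shows "mtrace (W ** X ** adj W) = mtrace X"
proof -
  have "mtrace (W ** X ** adj W) = (\<Sum>k\<in>UNIV. \<Sum>l\<in>UNIV. X$k$l * (adj W ** W)$l$k)"
    by (simp add: mtrace_def matrix_matrix_mult_def adj_def sum_2 algebra_simps)
  then show ?thesis
    using assms by (simp add: unitary_op_def mat_def sum_2 mtrace_def)
qed

lemma trace_preserving_choi:
  assumes "trace_preserving \<Phi>"
  shows "choi \<Phi> c d 1 1 + choi \<Phi> c d 2 2 = of_bool (c = d)"
proof -
  have "mtrace (\<Phi> (matrix_unit c d)) = mtrace (matrix_unit c d)"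
    using assms by (simp add: trace_preserving_def)
  then show ?thesis by (simp add: mtrace_def sum_2 choi_def matrix_unit_def) (metis exhaust_2)
qed

text \<open>The Choi-tensor trace below is \<open>d\<^sup>2 = 4\<close> times the entanglement fidelity
  \<open>\<langle>\<Phi>\<^sup>+|(id \<otimes> \<Phi>)(|\<Phi>\<^sup>+\<rangle>\<langle>\<Phi>\<^sup>+|)|\<Phi>\<^sup>+\<rangle>\<close>.\<close>

definition ent_overlap :: "(qop \<Rightarrow> qop) \<Rightarrow> complex" where
  "ent_overlap \<Phi> = (\<Sum>a\<in>UNIV. \<Sum>b\<in>UNIV. choi \<Phi> a b a b)"

text \<open>Since \<open>sphere_moment4 = 1/8\<close>, this is the familiar \<open>(2 + 4 F\<^sub>e) / 6\<close>; only the sign of the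
  constant is needed below.\<close>

lemma avg_fidelity_integral:
  assumes lin: "clinear_map \<Phi>" and tp: "trace_preserving \<Phi>"
  shows "(\<integral>x. Re (expval x (\<Phi> (ketbra x))) \<partial>sphere_measure) =
    4 * sphere_moment4 / 3 * (2 + Re (ent_overlap \<Phi>))"
proof -
  have expand: "expval x (\<Phi> (ketbra x)) = (\<Sum>i\<in>UNIV. \<Sum>j\<in>UNIV. \<Sum>a\<in>UNIV. \<Sum>b\<in>UNIV.
      choi \<Phi> a b i j * (cnj (x$i) * x$j * x$a * cnj (x$b)))" for x
    by (simp add: expval_def clinear_map_choi_expansion[OF lin] ketbra_def sum_2 algebra_simps)
  have "integrable sphere_measure (\<lambda>x. expval x (\<Phi> (ketbra x)))"
    unfolding expand by (simp add: integrable_coordinate_moment)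
  then have "(\<integral>x. Re (expval x (\<Phi> (ketbra x))) \<partial>sphere_measure) =
      Re (\<integral>x. expval x (\<Phi> (ketbra x)) \<partial>sphere_measure)"
    by simp
  also have "(\<integral>x. expval x (\<Phi> (ketbra x)) \<partial>sphere_measure) = (\<Sum>i\<in>UNIV. \<Sum>j\<in>UNIV. \<Sum>a\<in>UNIV. \<Sum>b\<in>UNIV.
      choi \<Phi> a b i j * (of_real (4 * sphere_moment4 / 3) * (of_bool (i = j \<and> a = b) + of_bool (i = a \<and> j = b))))"
    unfolding expand by (simp add: integrable_coordinate_moment integral_coordinate_moment)
  also have "\<dots> = of_real (4 * sphere_moment4 / 3) * (2 + ent_overlap \<Phi>)"
  proof -
    have tr: "choi \<Phi> 1 1 2 2 = 1 - choi \<Phi> 1 1 1 1" "choi \<Phi> 2 2 1 1 = 1 - choi \<Phi> 2 2 2 2"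
      using trace_preserving_choi[OF tp, of 1 1] trace_preserving_choi[OF tp, of 2 2]
      by (simp_all add: eq_diff_eq add.commute)
    show ?thesis by (simp add: sum_2 ent_overlap_def tr field_simps)
  qed
  finally show ?thesis by simp
qed

lemma ent_overlap_comp:
  assumes "clinear_map \<Psi>"
  shows "ent_overlap (\<lambda>A. \<Psi> (\<Phi> A)) =
    (\<Sum>a\<in>UNIV. \<Sum>b\<in>UNIV. \<Sum>c\<in>UNIV. \<Sum>d\<in>UNIV. choi \<Phi> a b c d * choi \<Psi> c d a b)"
  unfolding ent_overlap_def choi_def[of "\<lambda>A. \<Psi> (\<Phi> A)"] clinear_map_choi_expansion[OF assms]
  by (simp add: choi_def sum_2 algebra_simps)

section \<open>Positive semidefinite real forms\<close>

definition bform :: "('a::finite \<Rightarrow> 'a \<Rightarrow> real) \<Rightarrow> ('a \<Rightarrow> real) \<Rightarrow> ('a \<Rightarrow> real) \<Rightarrow> real" where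
  "bform H y z = (\<Sum>i\<in>UNIV. \<Sum>j\<in>UNIV. y i * H i j * z j)"

abbreviation qform :: "('a::finite \<Rightarrow> 'a \<Rightarrow> real) \<Rightarrow> ('a \<Rightarrow> real) \<Rightarrow> real" where
  "qform H y \<equiv> bform H y y"

definition psd :: "('a::finite \<Rightarrow> 'a \<Rightarrow> real) \<Rightarrow> bool" where
  "psd H \<longleftrightarrow> (\<forall>y. 0 \<le> qform H y)"

lemma qform_add:
  assumes "\<And>i j. H i j = H j i"
  shows "qform H (\<lambda>i. y i + z i) = qform H y + 2 * bform H y z + qform H z"
proof -
  have "bform H z y = bform H y z"
    unfolding bform_def using assms by (subst sum.swap) (simp add: mult_ac)
  then show ?thesis
    by (simp add: bform_def algebra_simps sum.distrib)
qed

lemma bform_scale_right: "bform H y (\<lambda>j. t * z j) = t * bform H y z"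
  by (simp add: bform_def sum_distrib_left mult_ac)

lemma qform_scale: "qform H (\<lambda>i. t * y i) = t\<^sup>2 * qform H y"
  by (simp add: bform_def sum_distrib_left mult_ac power2_eq_square)

lemma bform_delta_right: "bform H y (\<lambda>j. of_bool (j = k)) = (\<Sum>i\<in>UNIV. y i * H i k)"
  by (simp add: bform_def)

lemma qform_delta: "qform H (\<lambda>i. of_bool (i = k)) = H k k"
  by (simp add: bform_def Int_insert_left if_distrib[where f = "sum _"] cong: if_cong)

lemma psd_diag_nonneg: "psd H \<Longrightarrow> 0 \<le> H k k"
  by (metis psd_def qform_delta)

lemma psd_diag_zero_row:
  assumes psd: "psd H" and sym: "\<And>i j. H i j = H j i" and "H k k = 0"
  shows "H k j = 0"
proof (rule ccontr)
  assume "H k j \<noteq> 0"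
  have "0 \<le> H j j + 2 * t * H k j" for t
  proof -
    have "0 \<le> qform H (\<lambda>i. of_bool (i = j) + t * of_bool (i = k))"
      using psd by (simp add: psd_def)
    also have "\<dots> = H j j + 2 * t * H k j"
      by (simp only: qform_add[OF sym] qform_delta qform_scale bform_scale_right bform_delta_right
          \<open>H k k = 0\<close>) (simp add: sym[of j k])
    finally show ?thesis .
  qed
  from this[of "- (H j j + 1) / (2 * H k j)"] \<open>H k j \<noteq> 0\<close> show False
    by (simp add: field_simps)
qed

definition schur_complement :: "('a \<Rightarrow> 'a \<Rightarrow> real) \<Rightarrow> 'a \<Rightarrow> 'a \<Rightarrow> 'a \<Rightarrow> real" where
  "schur_complement H k i j = H i j - H k i * H k j / H k k"

lemma psd_schur_complement:
  assumes psd: "psd H" and sym: "\<And>i j. H i j = H j i"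
  shows "psd (schur_complement H k)"
proof (cases "H k k = 0")
  case True
  then have "schur_complement H k = H"
    using psd_diag_zero_row[OF psd sym True] by (simp add: schur_complement_def fun_eq_iff)
  with psd show ?thesis by simp
next
  case False
  with psd_diag_nonneg[OF psd, of k] have pos: "0 < H k k" by simp
  show ?thesis
    unfolding psd_def
  proof
    fix y :: "'a \<Rightarrow> real"
    define s where "s = (\<Sum>i\<in>UNIV. y i * H i k)"
    have "qform (schur_complement H k) y =
        qform H y - (\<Sum>i\<in>UNIV. \<Sum>j\<in>UNIV. (y i * H k i) * (y j * H k j)) / H k k"
      by (simp add: bform_def schur_complement_def algebra_simps sum_subtractf sum_divide_distrib)
    also have "(\<Sum>i\<in>UNIV. \<Sum>j\<in>UNIV. (y i * H k i) * (y j * H k j)) = s\<^sup>2"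
      by (simp add: s_def sym[of k] power2_eq_square sum_product)
    also have "qform H y - s\<^sup>2 / H k k = qform H y + 2 * (- s / H k k) * s + (- s / H k k)\<^sup>2 * H k k"
      using pos by (simp add: field_simps power2_eq_square)
    also have "\<dots> = qform H (\<lambda>i. y i + (- s / H k k) * of_bool (i = k))"
      by (simp only: qform_add[OF sym] qform_scale bform_scale_right qform_delta bform_delta_right s_def)
    also have "0 \<le> \<dots>"
      using psd by (simp add: psd_def)
    finally show "0 \<le> qform (schur_complement H k) y" .
  qed
qed

lemma schur_complement_pivot_row:
  assumes "psd H" "\<And>i j. H i j = H j i"
  shows "schur_complement H k k j = 0"
  using psd_diag_zero_row[OF assms, of k j] by (cases "H k k = 0") (simp_all add: schur_complement_def)

lemma psd_split_rank_one:
  fixes H :: "'a::finite \<Rightarrow> 'a \<Rightarrow> real"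
  assumes psd: "psd H" and sym: "\<And>i j. H i j = H j i"
    and supp: "\<And>i j. i \<notin> insert k K \<or> j \<notin> insert k K \<Longrightarrow> H i j = 0"
  obtains H' u where "psd H'" "\<And>i j. H' i j = H' j i" "\<And>i j. i \<notin> K \<or> j \<notin> K \<Longrightarrow> H' i j = 0"
    "\<And>i j. H i j = H' i j + u i * u j"
proof (rule that[of "schur_complement H k" "\<lambda>i. H k i / sqrt (H k k)"])
  show "psd (schur_complement H k)"
    by (rule psd_schur_complement[OF psd sym])
  show "schur_complement H k i j = schur_complement H k j i" for i j
    using sym by (simp add: schur_complement_def mult.commute)
  show "schur_complement H k i j = 0" if "i \<notin> K \<or> j \<notin> K" for i j
  proof (cases "i = k \<or> j = k")
    case True
    then show ?thesis
      using schur_complement_pivot_row[OF psd sym, of i] schur_complement_pivot_row[OF psd sym, of j]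
      by (auto simp: schur_complement_def sym[of i k] mult.commute)
  next
    case False
    with that have "i \<notin> insert k K \<or> j \<notin> insert k K"
      by simp
    then have "H i j = 0" "H k i = 0 \<or> H k j = 0"
      using supp[of i j] supp[of k i] supp[of k j] by blast+
    then show ?thesis
      by (auto simp: schur_complement_def)
  qed
  show "H i j = schur_complement H k i j + H k i / sqrt (H k k) * (H k j / sqrt (H k k))" for i j
    using psd_diag_nonneg[OF psd, of k] by (simp add: schur_complement_def real_sqrt_mult[symmetric])
qed

lemma psd_gram_decomposition:
  fixes H :: "'a::finite \<Rightarrow> 'a \<Rightarrow> real"
  assumes "psd H" "\<And>i j. H i j = H j i"
  obtains n :: nat and v where "\<And>i j. H i j = (\<Sum>l<n. v l i * v l j)"
proof -
  have "\<exists>n::nat. \<exists>v. \<forall>i j. H i j = (\<Sum>l<n. v l i * v l j)"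
    if "finite K" "psd H" "\<And>i j. H i j = H j i" "\<And>i j. i \<notin> K \<or> j \<notin> K \<Longrightarrow> H i j = 0"
    for K and H :: "'a \<Rightarrow> 'a \<Rightarrow> real"
    using that
  proof (induction K arbitrary: H rule: finite_induct)
    case empty
    show ?case
    proof (intro exI allI)
      show "H i j = (\<Sum>l<0::nat. (\<lambda>_ _. 0) l i * (\<lambda>_ _. 0) l j)" for i j
        using empty.prems by simp
    qed
  next
    case (insert k K)
    obtain H' u where H': "psd H'" "\<And>i j. H' i j = H' j i" "\<And>i j. i \<notin> K \<or> j \<notin> K \<Longrightarrow> H' i j = 0"
      and split: "\<And>i j. H i j = H' i j + u i * u j"
      using psd_split_rank_one[of H k K, OF insert.prems] by blast
    obtain n :: nat and v where "\<forall>i j. H' i j = (\<Sum>l<n. v l i * v l j)"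
      using insert.IH[OF H'] by blast
    then have "H i j = (\<Sum>l<Suc n. (v(n := u)) l i * (v(n := u)) l j)" for i j
      by (simp add: split)
    then show ?case by blast
  qed
  from this[OF finite_class.finite_UNIV assms] show ?thesis
    using that by blast
qed

lemma psd_trace_mult_nonneg:
  fixes H R :: "'a::finite \<Rightarrow> 'a \<Rightarrow> real"
  assumes "psd H" "\<And>i j. H i j = H j i" "psd R"
  shows "0 \<le> (\<Sum>i\<in>UNIV. \<Sum>j\<in>UNIV. H i j * R i j)"
proof -
  obtain n :: nat and v where v: "\<And>i j. H i j = (\<Sum>l<n. v l i * v l j)"
    using psd_gram_decomposition[OF assms(1,2)] by blast
  have "(\<Sum>i\<in>UNIV. \<Sum>j\<in>UNIV. H i j * R i j) = (\<Sum>i\<in>UNIV. \<Sum>j\<in>UNIV. \<Sum>l<n. v l i * R i j * v l j)"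
    by (simp add: v sum_distrib_right) (simp add: mult_ac)
  also have "\<dots> = (\<Sum>i\<in>UNIV. \<Sum>l<n. \<Sum>j\<in>UNIV. v l i * R i j * v l j)"
    by (intro sum.cong refl sum.swap)
  also have "\<dots> = (\<Sum>l<n. qform R (v l))"
    unfolding bform_def by (rule sum.swap)
  also have "0 \<le> \<dots>"
    using \<open>psd R\<close> by (simp add: psd_def sum_nonneg)
  finally show ?thesis .
qed

lemma qform_max_on_sphere:
  fixes H :: "'n::finite \<Rightarrow> 'n \<Rightarrow> real"
  obtains x :: "real^'n" where "norm x = 1" "\<And>y. qform H (($) y) \<le> qform H (($) x) * (norm y)\<^sup>2"
proof -
  have cont: "continuous_on UNIV (\<lambda>y::real^'n. qform H (($) y))"
    unfolding bform_def by (intro continuous_intros)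
  have "\<exists>x\<in>sphere (0::real^'n) 1. \<forall>y\<in>sphere 0 1. qform H (($) y) \<le> qform H (($) x)"
    by (rule continuous_attains_sup) (auto intro: continuous_on_subset[OF cont])
  then obtain x :: "real^'n" where x: "norm x = 1" "\<And>y. norm y = 1 \<Longrightarrow> qform H (($) y) \<le> qform H (($) x)"
    by auto
  have "qform H (($) y) \<le> qform H (($) x) * (norm y)\<^sup>2" for y
  proof (cases "y = 0")
    case True
    then show ?thesis by (simp add: bform_def)
  next
    case False
    have "($) y = (\<lambda>i. norm y * (y /\<^sub>R norm y) $ i)"
      using False by (simp add: fun_eq_iff)
    then have "qform H (($) y) = qform H (\<lambda>i. norm y * (y /\<^sub>R norm y) $ i)"
      by (rule arg_cong)
    also have "\<dots> = (norm y)\<^sup>2 * qform H (($) (y /\<^sub>R norm y))"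
      by (rule qform_scale)
    also have "\<dots> \<le> (norm y)\<^sup>2 * qform H (($) x)"
      using x(2)[of "y /\<^sub>R norm y"] False by (simp add: mult_left_mono)
    finally show ?thesis by (simp add: mult.commute)
  qed
  then show ?thesis
    using that x(1) by blast
qed

section \<open>Positivity of the Choi tensor\<close>

lemma qform_two_point:
  fixes A :: "'a::finite \<Rightarrow> 'a \<Rightarrow> complex"
  assumes "p \<noteq> q"
  shows "(\<Sum>\<alpha>\<in>UNIV. \<Sum>\<beta>\<in>UNIV. cnj (a * of_bool (\<alpha> = p) + b * of_bool (\<alpha> = q)) * A \<alpha> \<beta> *
      (a * of_bool (\<beta> = p) + b * of_bool (\<beta> = q)))
    = cnj a * (a * A p p + b * A p q) + cnj b * (a * A q p + b * A q q)"
  using assms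
  by (simp add: of_bool_def if_distrib[of cnj] if_distrib[of "\<lambda>x. x * _"] if_distrib[of "\<lambda>x. _ * x"]
      sum.distrib distrib_left distrib_right cong: if_cong)

lemma hermitian_if_qform_real:
  fixes A :: "'a::finite \<Rightarrow> 'a \<Rightarrow> complex"
  assumes real: "\<And>z. Im (\<Sum>\<alpha>\<in>UNIV. \<Sum>\<beta>\<in>UNIV. cnj (z \<alpha>) * A \<alpha> \<beta> * z \<beta>) = 0"
  shows "A q p = cnj (A p q)"
proof (cases "p = q")
  case True
  then show ?thesis
    using real[of "\<lambda>\<alpha>. of_bool (\<alpha> = p)"]
    by (simp add: complex_eq_iff of_bool_def if_distrib[of "\<lambda>x. x * _"] if_distrib[of "\<lambda>x. _ * x"]
        if_distrib[of Re] if_distrib[of Im] cong: if_cong)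
next
  case False
  have "Im (cnj a * (a * A p p + b * A p q) + cnj b * (a * A q p + b * A q q)) = 0" for a b
    using real[of "\<lambda>\<alpha>. a * of_bool (\<alpha> = p) + b * of_bool (\<alpha> = q)"] by (simp only: qform_two_point[OF False])
  from this[of 1 0] this[of 0 1] this[of 1 1] this[of 1 \<i>] show ?thesis
    by (simp add: complex_eq_iff algebra_simps)
qed

definition choi_form :: "(qop \<Rightarrow> qop) \<Rightarrow> (2 \<times> 2 \<Rightarrow> complex) \<Rightarrow> complex" where
  "choi_form \<Phi> z =
    (\<Sum>\<alpha>\<in>UNIV. \<Sum>\<beta>\<in>UNIV. cnj (z \<alpha>) * choi \<Phi> (fst \<alpha>) (fst \<beta>) (snd \<alpha>) (snd \<beta>) * z \<beta>)"

definition index2 :: "nat \<Rightarrow> 2" where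
  "index2 i = (if i = 0 then 1 else 2)"

text \<open>The block matrix of matrix units is twice the projector onto the maximally entangled
  vector, so complete positivity makes the Choi matrix positive semidefinite.\<close>

lemma block_psd_matrix_units: "block_psd 2 (\<lambda>i j. matrix_unit (index2 i) (index2 j))"
proof -
  have "block_qform 2 (\<lambda>i j. matrix_unit (index2 i) (index2 j)) v =
      of_real ((cmod (v 0 $ 1 + v 1 $ 2))\<^sup>2)" for v
    using complex_norm_square[of "v 0 $ 1 + v 1 $ 2"]
    by (simp add: block_qform_def numeral_2_eq_2 sum_2 matrix_unit_def index2_def algebra_simps)
  then show ?thesis
    unfolding block_psd_def by simp
qed

lemma choi_form_block_qform:
  "choi_form \<Phi> z =
    block_qform 2 (\<lambda>i j. \<Phi> (matrix_unit (index2 i) (index2 j))) (\<lambda>i. \<chi> k. z (index2 i, k))"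
  by (simp add: choi_form_def block_qform_def numeral_2_eq_2 sum_2 UNIV_Times_UNIV[symmetric]
      sum.cartesian_product' index2_def choi_def algebra_simps del: UNIV_Times_UNIV)

lemma choi_form_real_nonneg:
  assumes "completely_positive \<Phi>"
  shows "Im (choi_form \<Phi> z) = 0" and "0 \<le> Re (choi_form \<Phi> z)"
proof -
  have "block_psd 2 (\<lambda>i j. \<Phi> (matrix_unit (index2 i) (index2 j)))"
    using assms block_psd_matrix_units unfolding completely_positive_def by blast
  then show "Im (choi_form \<Phi> z) = 0" "0 \<le> Re (choi_form \<Phi> z)"
    unfolding block_psd_def choi_form_block_qform by blast+
qed

lemma choi_hermitian:
  assumes "completely_positive \<Phi>"
  shows "choi \<Phi> b a d c = cnj (choi \<Phi> a b c d)"
  using hermitian_if_qform_real[of "\<lambda>\<alpha> \<beta>. choi \<Phi> (fst \<alpha>) (fst \<beta>) (snd \<alpha>) (snd \<beta>)" "(a, c)" "(b, d)"]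
    choi_form_real_nonneg(1)[OF assms]
  by (simp add: choi_form_def)

section \<open>Unit quaternions and the optimal unitary correction\<close>

text \<open>The basis \<open>1, i\<sigma>\<^sub>x, i\<sigma>\<^sub>y, i\<sigma>\<^sub>z\<close> of the quaternions inside \<open>L(H)\<close>: the unit sphere of
  \<open>\<real>\<^sup>4\<close> is mapped onto \<open>SU(2)\<close> by \<open>y \<mapsto> \<Sum>\<^sub>m y\<^sub>m Y\<^sub>m\<close>.\<close>

definition quat_basis :: "4 \<Rightarrow> qop" where
  "quat_basis m = (if m = 1 then (\<chi> i j. if i = j then 1 else 0)
     else if m = 2 then (\<chi> i j. if i = j then 0 else \<i>)
     else if m = 3 then (\<chi> i j. if i = j then 0 else if i = 1 then 1 else -1)
     else (\<chi> i j. if i = j then (if i = 1 then \<i> else -\<i>) else 0))"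

lemma quat_basis_entries:
  "quat_basis 1 $ 1 $ 1 = 1" "quat_basis 1 $ 1 $ 2 = 0" "quat_basis 1 $ 2 $ 1 = 0" "quat_basis 1 $ 2 $ 2 = 1"
  "quat_basis 2 $ 1 $ 1 = 0" "quat_basis 2 $ 1 $ 2 = \<i>" "quat_basis 2 $ 2 $ 1 = \<i>" "quat_basis 2 $ 2 $ 2 = 0"
  "quat_basis 3 $ 1 $ 1 = 0" "quat_basis 3 $ 1 $ 2 = 1" "quat_basis 3 $ 2 $ 1 = -1" "quat_basis 3 $ 2 $ 2 = 0"
  "quat_basis 4 $ 1 $ 1 = \<i>" "quat_basis 4 $ 1 $ 2 = 0" "quat_basis 4 $ 2 $ 1 = 0" "quat_basis 4 $ 2 $ 2 = -\<i>"
  by (simp_all add: quat_basis_def)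

definition quat_op :: "real^4 \<Rightarrow> qop" where
  "quat_op y = (\<chi> a c. \<Sum>m\<in>UNIV. of_real (y$m) * quat_basis m $ a $ c)"

lemma quat_op_entries:
  "quat_op y $ 1 $ 1 = Complex (y$1) (y$4)" "quat_op y $ 1 $ 2 = Complex (y$3) (y$2)"
  "quat_op y $ 2 $ 1 = Complex (- y$3) (y$2)" "quat_op y $ 2 $ 2 = Complex (y$1) (- y$4)"
  by (simp_all add: quat_op_def sum_4 quat_basis_entries complex_eq_iff)

lemma unitary_quat_op:
  assumes "norm y = 1"
  shows "unitary_op (quat_op y)"
proof -
  have "y$1 * y$1 + y$2 * y$2 + y$3 * y$3 + y$4 * y$4 = 1"
    using assms by (simp add: norm_eq_sqrt_inner inner_vec_def sum_4)
  then show ?thesis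
    unfolding unitary_op_def
    by (simp add: vec_eq_iff forall_2 matrix_matrix_mult_def adj_def sum_2 quat_op_entries mat_def
        complex_eq_iff algebra_simps)
qed

definition quat_overlap :: "(2 \<Rightarrow> 2 \<Rightarrow> 2 \<Rightarrow> 2 \<Rightarrow> complex) \<Rightarrow> 4 \<Rightarrow> 4 \<Rightarrow> complex" where
  "quat_overlap n m v = (\<Sum>a\<in>UNIV. \<Sum>b\<in>UNIV. \<Sum>c\<in>UNIV. \<Sum>d\<in>UNIV.
     quat_basis m $ a $ c * n a b c d * cnj (quat_basis v $ b $ d))"

definition quat_choi :: "(2 \<Rightarrow> 2 \<Rightarrow> 2 \<Rightarrow> 2 \<Rightarrow> complex) \<Rightarrow> 4 \<Rightarrow> 4 \<Rightarrow> complex" where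
  "quat_choi k m v = (\<Sum>a\<in>UNIV. \<Sum>b\<in>UNIV. \<Sum>c\<in>UNIV. \<Sum>d\<in>UNIV.
     cnj (quat_basis m $ a $ c) * quat_basis v $ b $ d * k c d a b)"

lemma quat_overlap_entries:
  "quat_overlap n 1 1 = n 1 1 1 1 + n 1 2 1 2 + n 2 1 2 1 + n 2 2 2 2"
  "quat_overlap n 1 2 = 0 - \<i> * n 1 1 1 2 - \<i> * n 1 2 1 1 - \<i> * n 2 1 2 2 - \<i> * n 2 2 2 1"
  "quat_overlap n 1 3 = n 1 1 1 2 - n 1 2 1 1 + n 2 1 2 2 - n 2 2 2 1"
  "quat_overlap n 1 4 = 0 - \<i> * n 1 1 1 1 + \<i> * n 1 2 1 2 - \<i> * n 2 1 2 1 + \<i> * n 2 2 2 2"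
  "quat_overlap n 2 1 = \<i> * n 1 1 2 1 + \<i> * n 1 2 2 2 + \<i> * n 2 1 1 1 + \<i> * n 2 2 1 2"
  "quat_overlap n 2 2 = n 1 1 2 2 + n 1 2 2 1 + n 2 1 1 2 + n 2 2 1 1"
  "quat_overlap n 2 3 = \<i> * n 1 1 2 2 - \<i> * n 1 2 2 1 + \<i> * n 2 1 1 2 - \<i> * n 2 2 1 1"
  "quat_overlap n 2 4 = n 1 1 2 1 - n 1 2 2 2 + n 2 1 1 1 - n 2 2 1 2"
  "quat_overlap n 3 1 = n 1 1 2 1 + n 1 2 2 2 - n 2 1 1 1 - n 2 2 1 2"
  "quat_overlap n 3 2 = 0 - \<i> * n 1 1 2 2 - \<i> * n 1 2 2 1 + \<i> * n 2 1 1 2 + \<i> * n 2 2 1 1"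
  "quat_overlap n 3 3 = n 1 1 2 2 - n 1 2 2 1 - n 2 1 1 2 + n 2 2 1 1"
  "quat_overlap n 3 4 = 0 - \<i> * n 1 1 2 1 + \<i> * n 1 2 2 2 + \<i> * n 2 1 1 1 - \<i> * n 2 2 1 2"
  "quat_overlap n 4 1 = \<i> * n 1 1 1 1 + \<i> * n 1 2 1 2 - \<i> * n 2 1 2 1 - \<i> * n 2 2 2 2"
  "quat_overlap n 4 2 = n 1 1 1 2 + n 1 2 1 1 - n 2 1 2 2 - n 2 2 2 1"
  "quat_overlap n 4 3 = \<i> * n 1 1 1 2 - \<i> * n 1 2 1 1 - \<i> * n 2 1 2 2 + \<i> * n 2 2 2 1"
  "quat_overlap n 4 4 = n 1 1 1 1 - n 1 2 1 2 - n 2 1 2 1 + n 2 2 2 2"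
  by (simp_all add: quat_overlap_def sum_2 quat_basis_entries algebra_simps)

lemma quat_choi_entries:
  "quat_choi k 1 1 = k 1 1 1 1 + k 1 2 1 2 + k 2 1 2 1 + k 2 2 2 2"
  "quat_choi k 1 2 = \<i> * k 1 1 1 2 + \<i> * k 1 2 1 1 + \<i> * k 2 1 2 2 + \<i> * k 2 2 2 1"
  "quat_choi k 1 3 = 0 - k 1 1 1 2 + k 1 2 1 1 - k 2 1 2 2 + k 2 2 2 1"
  "quat_choi k 1 4 = \<i> * k 1 1 1 1 - \<i> * k 1 2 1 2 + \<i> * k 2 1 2 1 - \<i> * k 2 2 2 2"
  "quat_choi k 2 1 = 0 - \<i> * k 1 1 2 1 - \<i> * k 1 2 2 2 - \<i> * k 2 1 1 1 - \<i> * k 2 2 1 2"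
  "quat_choi k 2 2 = k 1 1 2 2 + k 1 2 2 1 + k 2 1 1 2 + k 2 2 1 1"
  "quat_choi k 2 3 = \<i> * k 1 1 2 2 - \<i> * k 1 2 2 1 + \<i> * k 2 1 1 2 - \<i> * k 2 2 1 1"
  "quat_choi k 2 4 = k 1 1 2 1 - k 1 2 2 2 + k 2 1 1 1 - k 2 2 1 2"
  "quat_choi k 3 1 = 0 - k 1 1 2 1 - k 1 2 2 2 + k 2 1 1 1 + k 2 2 1 2"
  "quat_choi k 3 2 = 0 - \<i> * k 1 1 2 2 - \<i> * k 1 2 2 1 + \<i> * k 2 1 1 2 + \<i> * k 2 2 1 1"
  "quat_choi k 3 3 = k 1 1 2 2 - k 1 2 2 1 - k 2 1 1 2 + k 2 2 1 1"
  "quat_choi k 3 4 = 0 - \<i> * k 1 1 2 1 + \<i> * k 1 2 2 2 + \<i> * k 2 1 1 1 - \<i> * k 2 2 1 2"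
  "quat_choi k 4 1 = 0 - \<i> * k 1 1 1 1 - \<i> * k 1 2 1 2 + \<i> * k 2 1 2 1 + \<i> * k 2 2 2 2"
  "quat_choi k 4 2 = k 1 1 1 2 + k 1 2 1 1 - k 2 1 2 2 - k 2 2 2 1"
  "quat_choi k 4 3 = \<i> * k 1 1 1 2 - \<i> * k 1 2 1 1 - \<i> * k 2 1 2 2 + \<i> * k 2 2 2 1"
  "quat_choi k 4 4 = k 1 1 1 1 - k 1 2 1 2 - k 2 1 2 1 + k 2 2 2 2"
  by (simp_all add: quat_choi_def sum_2 quat_basis_entries algebra_simps)

definition overlap_form :: "(qop \<Rightarrow> qop) \<Rightarrow> 4 \<Rightarrow> 4 \<Rightarrow> real" where
  "overlap_form \<Phi> m v = Re (quat_overlap (choi \<Phi>) m v + quat_overlap (choi \<Phi>) v m) / 2"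

lemma qform_overlap_form:
  "qform (overlap_form \<Phi>) (($) y) = Re (ent_overlap (\<lambda>A. quat_op y ** \<Phi> A ** adj (quat_op y)))"
proof -
  have "ent_overlap (\<lambda>A. quat_op y ** \<Phi> A ** adj (quat_op y)) =
      (\<Sum>i\<in>UNIV. \<Sum>j\<in>UNIV. of_real (y$i * y$j) * quat_overlap (choi \<Phi>) i j)"
    by (simp only: ent_overlap_def matrix_matrix_mult_def adj_def sum_2 vec_lambda_beta quat_op_entries
        sum_4 quat_overlap_entries choi_def) (simp add: complex_eq_iff algebra_simps)
  then show ?thesis
    by (simp add: bform_def overlap_form_def sum_4 algebra_simps)
qed

lemma qform_quat_choi:
  "qform (\<lambda>m v. Re (quat_choi (choi \<Phi>) m v)) (($) y) =
    Re (choi_form \<Phi> (\<lambda>\<alpha>. quat_op y $ snd \<alpha> $ fst \<alpha>))"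
  by (simp only: bform_def choi_form_def UNIV_Times_UNIV[symmetric] sum.cartesian_product'
        sum_2 fst_conv snd_conv quat_op_entries sum_4 quat_choi_entries)
    (simp add: algebra_simps)

lemma psd_quat_choi:
  assumes "completely_positive \<Phi>"
  shows "psd (\<lambda>m v. Re (quat_choi (choi \<Phi>) m v))"
  unfolding psd_def
proof
  fix y :: "4 \<Rightarrow> real"
  have "($) (\<chi> i. y i) = y"
    by (simp add: fun_eq_iff)
  then show "0 \<le> qform (\<lambda>m v. Re (quat_choi (choi \<Phi>) m v)) y"
    using qform_quat_choi[of \<Phi> "\<chi> i. y i"] choi_form_real_nonneg(2)[OF assms] by simp
qed

lemma trace_quat_choi:
  assumes "trace_preserving \<Phi>"
  shows "(\<Sum>m\<in>UNIV. Re (quat_choi (choi \<Phi>) m m)) = 4"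
  using trace_preserving_choi[OF assms, of 1 1] trace_preserving_choi[OF assms, of 2 2]
  by (simp add: sum_4 quat_choi_entries complex_eq_iff)

lemma overlap_form_pairing:
  assumes cp: "completely_positive \<Phi>" and tp: "trace_preserving \<Phi>" "trace_preserving \<Psi>"
    and lin: "clinear_map \<Psi>"
  shows "(\<Sum>m\<in>UNIV. \<Sum>v\<in>UNIV. overlap_form \<Phi> m v * Re (quat_choi (choi \<Psi>) m v)) =
    4 * Re (ent_overlap (\<lambda>A. \<Psi> (\<Phi> A)))"
proof -
  define n where "n = choi \<Phi>"
  define k where "k = choi \<Psi>"
  have herm: "n b a d c = cnj (n a b c d)" for a b c d
    unfolding n_def by (rule choi_hermitian[OF cp])
  have real: "Im (n a a c c) = 0" for a c
    using herm[of a a c c] by (subst (asm) complex_eq_iff) simp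
  have tr: "n c d 1 1 + n c d 2 2 = of_bool (c = d)" "k c d 1 1 + k c d 2 2 = of_bool (c = d)" for c d
    unfolding n_def k_def by (rule trace_preserving_choi[OF tp(1)], rule trace_preserving_choi[OF tp(2)])
  have n_herm: "n 2 1 1 1 = cnj (n 1 2 1 1)" "n 2 1 1 2 = cnj (n 1 2 2 1)" "n 2 1 2 1 = cnj (n 1 2 1 2)"
      "n 2 1 2 2 = cnj (n 1 2 2 2)" "n 1 1 2 1 = cnj (n 1 1 1 2)" "n 2 2 2 1 = cnj (n 2 2 1 2)"
    by (rule herm)+
  have n_trace: "n 1 1 2 2 = 1 - n 1 1 1 1" "n 2 2 2 2 = 1 - n 2 2 1 1" "n 1 2 2 2 = - n 1 2 1 1"
    using tr(1)[of 1 1] tr(1)[of 2 2] tr(1)[of 1 2]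
    by (simp_all add: eq_diff_eq add.commute add_eq_0_iff)
  have k_rules: "k 1 1 2 2 = 1 - k 1 1 1 1" "k 2 2 2 2 = 1 - k 2 2 1 1"
      "k 1 2 2 2 = - k 1 2 1 1" "k 2 1 2 2 = - k 2 1 1 1"
    using tr(2)[of 1 1] tr(2)[of 2 2] tr(2)[of 1 2] tr(2)[of 2 1]
    by (simp_all add: eq_diff_eq add.commute add_eq_0_iff)
  \<comment> \<open>Only real parts are paired; hermiticity and the trace conditions cancel the rest.\<close>
  have "(\<Sum>m\<in>UNIV. \<Sum>v\<in>UNIV. Re (quat_overlap n m v + quat_overlap n v m) / 2 * Re (quat_choi k m v)) =
      4 * Re (\<Sum>a\<in>UNIV. \<Sum>b\<in>UNIV. \<Sum>c\<in>UNIV. \<Sum>d\<in>UNIV. n a b c d * k c d a b)"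
    using real[of 1 1] real[of 2 2] real[of 1 2] real[of 2 1]
    by (simp only: sum_4 sum_2 quat_overlap_entries quat_choi_entries)
      (simp add: n_herm n_trace k_rules field_simps)
  then show ?thesis
    by (simp add: overlap_form_def ent_overlap_comp[OF lin] n_def k_def)
qed

lemma ent_overlap_le_max:
  assumes \<Phi>: "TPCP \<Phi>" and \<Psi>: "TPCP \<Psi>"
    and max: "\<And>y. qform (overlap_form \<Phi>) (($) y) \<le> qform (overlap_form \<Phi>) (($) x) * (norm y)\<^sup>2"
  shows "Re (ent_overlap (\<lambda>A. \<Psi> (\<Phi> A))) \<le> qform (overlap_form \<Phi>) (($) x)"
proof -
  define lmax where "lmax = qform (overlap_form \<Phi>) (($) x)"
  define H where "H i j = lmax * of_bool (i = j) - overlap_form \<Phi> i j" for i j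
  define R where "R i j = Re (quat_choi (choi \<Psi>) i j)" for i j
  have "psd H"
    unfolding psd_def
  proof
    fix y :: "4 \<Rightarrow> real"
    have "qform H y = lmax * (norm (\<chi> i. y i))\<^sup>2 - qform (overlap_form \<Phi>) (($) (\<chi> i. y i))"
      by (simp add: H_def bform_def norm_eq_sqrt_inner inner_vec_def sum_4 algebra_simps power2_eq_square)
    then show "0 \<le> qform H y"
      using max[of "\<chi> i. y i"] by (simp add: lmax_def mult.commute)
  qed
  moreover have "H i j = H j i" for i j
    by (simp add: H_def overlap_form_def add.commute)
  moreover have "psd R"
    unfolding R_def using \<Psi> by (simp add: TPCP_def psd_quat_choi)
  ultimately have "0 \<le> (\<Sum>i\<in>UNIV. \<Sum>j\<in>UNIV. H i j * R i j)"
    by (rule psd_trace_mult_nonneg)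
  also have "\<dots> = lmax * (\<Sum>i\<in>UNIV. R i i) - (\<Sum>i\<in>UNIV. \<Sum>j\<in>UNIV. overlap_form \<Phi> i j * R i j)"
    by (simp add: H_def sum_4 algebra_simps)
  also have "\<dots> = 4 * lmax - 4 * Re (ent_overlap (\<lambda>A. \<Psi> (\<Phi> A)))"
    using \<Phi> \<Psi> by (simp add: R_def TPCP_def completely_positive_def trace_quat_choi overlap_form_pairing)
  finally show ?thesis by (simp add: lmax_def)
qed

theorem theorem1:
  fixes \<N> :: "qop \<Rightarrow> qop"
  assumes "TPCP \<N>"
  shows "\<exists>W. unitary_op W \<and>
           (\<forall>\<C>. TPCP \<C> \<longrightarrow> avg_fidelity \<N> \<C> \<le> avg_fidelity \<N> (\<lambda>\<rho>. W ** \<rho> ** adj W))"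
proof -
  obtain x :: "real^4" where "norm x = 1"
    and max: "\<And>y. qform (overlap_form \<N>) (($) y) \<le> qform (overlap_form \<N>) (($) x) * (norm y)\<^sup>2"
    using qform_max_on_sphere[of "overlap_form \<N>"] by metis
  define W where "W = quat_op x"
  have W: "unitary_op W"
    unfolding W_def by (rule unitary_quat_op[OF \<open>norm x = 1\<close>])
  have fidelity: "avg_fidelity \<N> \<C> = 4 * sphere_moment4 / 3 * (2 + Re (ent_overlap (\<lambda>A. \<C> (\<N> A))))"
    if "clinear_map \<C>" "trace_preserving \<C>" for \<C>
    using assms that avg_fidelity_integral[of "\<lambda>A. \<C> (\<N> A)"]
    by (simp add: avg_fidelity_def TPCP_def completely_positive_def clinear_map_comp trace_preserving_def)
  have optimal: "avg_fidelity \<N> (\<lambda>\<rho>. W ** \<rho> ** adj W) = 4 * sphere_moment4 / 3 * (2 + qform (overlap_form \<N>) (($) x))"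
    using fidelity[of "\<lambda>\<rho>. W ** \<rho> ** adj W"] mtrace_conj_unitary[OF W]
    by (simp add: clinear_map_conj trace_preserving_def qform_overlap_form W_def)
  have "avg_fidelity \<N> \<C> \<le> avg_fidelity \<N> (\<lambda>\<rho>. W ** \<rho> ** adj W)" if "TPCP \<C>" for \<C>
    unfolding optimal
    using that fidelity[of \<C>] ent_overlap_le_max[OF assms that max] sphere_moment4_nonneg
    by (simp add: TPCP_def completely_positive_def mult_left_mono)
  with W show ?thesis
    by blast
qed

end
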